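(* Let $1<m<n$ and let $G=K_{m,n}$ be the uniform coloured complete bipartite graph with parts $V_1=\{1,\dots,m\}$ and $V_2=\{m+1,\dots,m+n\}$, with associated linear space $\mathcal L$. Let $E_1^c$ (resp. $E_2^c$) be the set of pairs of distinct vertices in $V_1$ (resp. $V_2$), and $E$ the set of edges $\{i,j\}$ with $i\in V_1$, $j\in V_2$. Then $r=3$, $s=5$, and the vector space of linear forms in $I(\mathcal L^{-1})$ is spanned by $x_{11}-x_{ii}$ ($i\in V_1$); $x_{m+1,m+1}-x_{ii}$ ($i\in V_2$); $x_{12}-x_{ij}$ ($\{i,j\}\in E_1^c$); $x_{m+1,m+2}-x_{ij}$ ($\{i,j\}\in E_2^c$); $x_{1,m+1}-x_{ij}$ ($\{i,j\}\in E$); $m\,x_{12}-n\,x_{m+n-1,m+n}$; and $m\,x_{11}-(n-m)\,x_{m+n-1,m+n}-m\,x_{m+n,m+n}$.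
   Context: For a simple graph $G$ on $V=\{1,\dots,N\}$, its uniform coloured version has one vertex colour and one edge colour, and its associated linear space is $\mathcal L=\{\lambda_1I_N+\lambda_2A_2:\lambda_1,\lambda_2\in\mathbb C\}\subseteq\mathbb S^N$, where $A_2$ is the 0/1 adjacency matrix of $G$. The reciprocal variety $\mathcal L^{-1}$ is the Zariski closure of $\{M^{-1}:M\in\mathcal L\text{ invertible}\}$, with vanishing ideal $I(\mathcal L^{-1})\subseteq\mathbb C[x_{ij}:1\le i\le j\le N]$, using $x_{ji}=x_{ij}$. Here $r$ is the number of distinct eigenvalues of $A_2$ and $s$ is the number of orbits of the automorphism group of $G$ acting on unordered pairs $\{i,j\}$ of (not necessarily distinct) vertices via $\{i,j\}\mapsto\{\sigma(i),\sigma(j)\}$. *)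

theory Defs
  imports "Jordan_Normal_Form.Char_Poly"
begin

text \<open>A simple graph on V = {1..N} is given by a symmetric irreflexive edge relation E.\<close>

definition adj_mat :: "nat \<Rightarrow> (nat \<Rightarrow> nat \<Rightarrow> bool) \<Rightarrow> complex mat" where
  "adj_mat N E = mat N N (\<lambda>(i,j). if E (i+1) (j+1) then 1 else 0)"
  (* Jordan_Normal_Form matrices are 0-indexed: entry (i,j) corresponds to vertices i+1, j+1 *)

definition num_distinct_eigenvalues :: "nat \<Rightarrow> (nat \<Rightarrow> nat \<Rightarrow> bool) \<Rightarrow> nat" where
  "num_distinct_eigenvalues N E = card {k. eigenvalue (adj_mat N E) k}"

definition graph_auts :: "nat \<Rightarrow> (nat \<Rightarrow> nat \<Rightarrow> bool) \<Rightarrow> (nat \<Rightarrow> nat) set" where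
  "graph_auts N E = {\<sigma>. \<sigma> permutes {1..N} \<and>
      (\<forall>i\<in>{1..N}. \<forall>j\<in>{1..N}. E i j \<longleftrightarrow> E (\<sigma> i) (\<sigma> j))}"

definition unordered_pairs :: "nat \<Rightarrow> nat set set" where
  "unordered_pairs N = {{i, j} | i j. i \<in> {1..N} \<and> j \<in> {1..N}}"

definition pair_orbits :: "nat \<Rightarrow> (nat \<Rightarrow> nat \<Rightarrow> bool) \<Rightarrow> nat set set set" where
  "pair_orbits N E = (\<lambda>p. (\<lambda>\<sigma>. \<sigma> ` p) ` graph_auts N E) ` unordered_pairs N"

definition num_pair_orbits :: "nat \<Rightarrow> (nat \<Rightarrow> nat \<Rightarrow> bool) \<Rightarrow> nat" where
  "num_pair_orbits N E = card (pair_orbits N E)"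

definition lin_space :: "nat \<Rightarrow> (nat \<Rightarrow> nat \<Rightarrow> bool) \<Rightarrow> complex mat set" where
  "lin_space N E = {l1 \<cdot>\<^sub>m 1\<^sub>m N + l2 \<cdot>\<^sub>m adj_mat N E | l1 l2. True}"

text \<open>A linear form in the variables x_ij (1 <= i <= j <= N) is represented by its
  coefficient function c, where c a b is the coefficient of x_ab (a <= b), and c a b = 0
  outside 1 <= a <= b <= N.\<close>

definition lin_forms :: "nat \<Rightarrow> (nat \<Rightarrow> nat \<Rightarrow> complex) set" where
  "lin_forms N = {c. \<forall>a b. c a b \<noteq> 0 \<longrightarrow> 1 \<le> a \<and> a \<le> b \<and> b \<le> N}"

definition lf_eval :: "nat \<Rightarrow> (nat \<Rightarrow> nat \<Rightarrow> complex) \<Rightarrow> complex mat \<Rightarrow> complex" where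
  "lf_eval N c X = (\<Sum>a\<in>{1..N}. \<Sum>b\<in>{a..N}. c a b * X $$ (a - 1, b - 1))"

definition var :: "nat \<Rightarrow> nat \<Rightarrow> (nat \<Rightarrow> nat \<Rightarrow> complex)" where
  "var i j = (\<lambda>a b. if a = min i j \<and> b = max i j then 1 else 0)"

definition lf_add :: "(nat \<Rightarrow> nat \<Rightarrow> complex) \<Rightarrow> (nat \<Rightarrow> nat \<Rightarrow> complex) \<Rightarrow> (nat \<Rightarrow> nat \<Rightarrow> complex)" where
  "lf_add f g = (\<lambda>a b. f a b + g a b)"

definition lf_sub :: "(nat \<Rightarrow> nat \<Rightarrow> complex) \<Rightarrow> (nat \<Rightarrow> nat \<Rightarrow> complex) \<Rightarrow> (nat \<Rightarrow> nat \<Rightarrow> complex)" where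
  "lf_sub f g = (\<lambda>a b. f a b - g a b)"

definition lf_scale :: "complex \<Rightarrow> (nat \<Rightarrow> nat \<Rightarrow> complex) \<Rightarrow> (nat \<Rightarrow> nat \<Rightarrow> complex)" where
  "lf_scale k f = (\<lambda>a b. k * f a b)"

definition lf_span :: "(nat \<Rightarrow> nat \<Rightarrow> complex) set \<Rightarrow> (nat \<Rightarrow> nat \<Rightarrow> complex) set" where
  "lf_span S = {(\<lambda>a b. \<Sum>g\<in>T. u g * g a b) | T u. finite T \<and> T \<subseteq> S}"

text \<open>Linear forms in the vanishing ideal of the reciprocal variety. A polynomial vanishes on
  the Zariski closure of a set iff it vanishes on the set, so these are exactly the linear
  forms vanishing at M^{-1} for every invertible M in L.\<close>
definition linear_forms_in_ideal :: "nat \<Rightarrow> (nat \<Rightarrow> nat \<Rightarrow> bool) \<Rightarrow> (nat \<Rightarrow> nat \<Rightarrow> complex) set" where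
  "linear_forms_in_ideal N E = {c \<in> lin_forms N.
      \<forall>M \<in> lin_space N E. \<forall>B \<in> carrier_mat N N. M * B = 1\<^sub>m N \<longrightarrow> lf_eval N c B = 0}"

definition Kmn :: "nat \<Rightarrow> nat \<Rightarrow> nat \<Rightarrow> nat \<Rightarrow> bool" where
  "Kmn m n i j = ((i \<in> {1..m} \<and> j \<in> {m+1..m+n}) \<or> (j \<in> {1..m} \<and> i \<in> {m+1..m+n}))"

definition Kmn_forms :: "nat \<Rightarrow> nat \<Rightarrow> (nat \<Rightarrow> nat \<Rightarrow> complex) set" where
  "Kmn_forms m n =
     {lf_sub (var 1 1) (var i i) | i. i \<in> {1..m}}
   \<union> {lf_sub (var (m+1) (m+1)) (var i i) | i. i \<in> {m+1..m+n}}
   \<union> {lf_sub (var 1 2) (var i j) | i j. i \<in> {1..m} \<and> j \<in> {1..m} \<and> i \<noteq> j}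
   \<union> {lf_sub (var (m+1) (m+2)) (var i j) | i j. i \<in> {m+1..m+n} \<and> j \<in> {m+1..m+n} \<and> i \<noteq> j}
   \<union> {lf_sub (var 1 (m+1)) (var i j) | i j. i \<in> {1..m} \<and> j \<in> {m+1..m+n}}
   \<union> {lf_sub (lf_scale (of_nat m) (var 1 2)) (lf_scale (of_nat n) (var (m+n-1) (m+n)))}
   \<union> {lf_sub (lf_sub (lf_scale (of_nat m) (var 1 1))
                       (lf_scale (of_nat n - of_nat m) (var (m+n-1) (m+n))))
             (lf_scale (of_nat m) (var (m+n) (m+n)))}"

end

theory Submission
  imports Defs "HOL-Library.Function_Algebras"
begin

text \<open>Write A for the adjacency matrix and S1 v, S2 v for the sums of the entries of a vector v
over the two parts. Every matrix l1 I + l2 A of the linear space acts on the pair (S1 v, S2 v) by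
the matrix [[l1, m l2], [n l2, l1]]. For (l1, l2) = (0, 1) this gives the spectrum
{0, sqrt(mn), -sqrt(mn)}. In general it shows that l1 I + l2 A is invertible only if l1 and
l1^2 - mn l2^2 are nonzero, and then its inverse is explicit, with entries depending only on the
orbit of the index pair. Modulo the first five families of generators every linear form is a
combination of one variable per orbit, and evaluating such a combination at the inverses for
(l1, l2) = (1, 0), (1, 1), (-1, 1) leaves exactly the combinations spanned by the generators.
Since m < n, automorphisms preserve both parts, while any transposition inside a part is an
automorphism; hence the orbits on pairs are the five evident classes.\<close>

section \<open>The linear space of K_{m,n} and its spectrum\<close>

lemma smult_mat_mult_vec:
  assumes "A \<in> carrier_mat nr nc" "v \<in> carrier_vec nc"
  shows "(k \<cdot>\<^sub>m A) *\<^sub>v v = k \<cdot>\<^sub>v (A *\<^sub>v v)"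
  using assms by (intro eq_vecI) (auto simp: smult_scalar_prod_distrib[of _ nc])

lemma adj_mat_carrier [simp]: "adj_mat N E \<in> carrier_mat N N"
  by (simp add: adj_mat_def)

lemma adj_mat_dim [simp]: "dim_row (adj_mat N E) = N" "dim_col (adj_mat N E) = N"
  by (simp_all add: adj_mat_def)

lemma Kmn_adj_entry:
  assumes "i < m + n" "j < m + n"
  shows "adj_mat (m + n) (Kmn m n) $$ (i, j) = (if (i < m) \<noteq> (j < m) then 1 else 0)"
  using assms unfolding adj_mat_def Kmn_def by auto

lemma Kmn_adj_mult_vec:
  assumes v: "v \<in> carrier_vec (m + n)"
  shows "adj_mat (m + n) (Kmn m n) *\<^sub>v v =
    vec (m + n) (\<lambda>i. if i < m then (\<Sum>k\<in>{m..<m+n}. v $ k) else (\<Sum>k\<in>{0..<m}. v $ k))"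
    (is "_ = ?w")
proof (rule eq_vecI)
  fix i assume "i < dim_vec ?w"
  then have i: "i < m + n" by simp
  let ?f = "\<lambda>k. if (i < m) \<noteq> (k < m) then v $ k else 0"
  have "(adj_mat (m + n) (Kmn m n) *\<^sub>v v) $ i = (\<Sum>k\<in>{0..<m+n}. ?f k)"
    using v i by (auto simp: scalar_prod_def Kmn_adj_entry intro!: sum.cong)
  also have "\<dots> = (\<Sum>k\<in>{0..<m}. ?f k) + (\<Sum>k\<in>{m..<m+n}. ?f k)"
    by (rule sum.atLeastLessThan_concat[symmetric]) auto
  finally show "(adj_mat (m + n) (Kmn m n) *\<^sub>v v) $ i = ?w $ i"
    using i by simp
qed simp

lemma Kmn_adj_mult_vec_part_sums:
  assumes v: "v \<in> carrier_vec (m + n)"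
  shows "(\<Sum>i\<in>{0..<m}. (adj_mat (m + n) (Kmn m n) *\<^sub>v v) $ i) = of_nat m * (\<Sum>k\<in>{m..<m+n}. v $ k)"
    and "(\<Sum>i\<in>{m..<m+n}. (adj_mat (m + n) (Kmn m n) *\<^sub>v v) $ i) = of_nat n * (\<Sum>k\<in>{0..<m}. v $ k)"
  using v by (simp_all add: Kmn_adj_mult_vec)

definition Kmn_pencil :: "nat \<Rightarrow> nat \<Rightarrow> complex \<Rightarrow> complex \<Rightarrow> complex mat" where
  "Kmn_pencil m n l1 l2 = l1 \<cdot>\<^sub>m 1\<^sub>m (m + n) + l2 \<cdot>\<^sub>m adj_mat (m + n) (Kmn m n)"

lemma Kmn_pencil_carrier [simp]: "Kmn_pencil m n l1 l2 \<in> carrier_mat (m + n) (m + n)"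
  by (simp add: Kmn_pencil_def)

lemma Kmn_pencil_dim [simp]:
  "dim_row (Kmn_pencil m n l1 l2) = m + n" "dim_col (Kmn_pencil m n l1 l2) = m + n"
  by (simp_all add: Kmn_pencil_def)

lemma lin_space_Kmn_iff: "M \<in> lin_space (m + n) (Kmn m n) \<longleftrightarrow> (\<exists>l1 l2. M = Kmn_pencil m n l1 l2)"
  unfolding lin_space_def Kmn_pencil_def by blast

lemma Kmn_pencil_mult_vec:
  assumes v: "v \<in> carrier_vec (m + n)"
  shows "Kmn_pencil m n l1 l2 *\<^sub>v v = l1 \<cdot>\<^sub>v v + l2 \<cdot>\<^sub>v (adj_mat (m + n) (Kmn m n) *\<^sub>v v)"
  using v by (simp add: Kmn_pencil_def add_mult_distrib_mat_vec[of _ "m+n" "m+n"]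
      smult_mat_mult_vec[of _ "m+n" "m+n"])

lemma Kmn_adj_eigenvalue_cases:
  assumes "eigenvalue (adj_mat (m + n) (Kmn m n)) k"
  shows "k = 0 \<or> k\<^sup>2 = of_nat (m * n)"
proof (cases "k = 0")
  case k: False
  let ?A = "adj_mat (m + n) (Kmn m n)"
  obtain v where v: "v \<in> carrier_vec (m + n)" "v \<noteq> 0\<^sub>v (m + n)" and Av: "?A *\<^sub>v v = k \<cdot>\<^sub>v v"
    using assms unfolding eigenvalue_def eigenvector_def by auto
  define S1 where "S1 = (\<Sum>i\<in>{0..<m}. v $ i)"
  define S2 where "S2 = (\<Sum>i\<in>{m..<m+n}. v $ i)"
  have "(\<Sum>i\<in>{0..<m}. (?A *\<^sub>v v) $ i) = k * S1" "(\<Sum>i\<in>{m..<m+n}. (?A *\<^sub>v v) $ i) = k * S2"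
    using v by (simp_all add: Av S1_def S2_def sum_distrib_left)
  then have S: "k * S1 = of_nat m * S2" "k * S2 = of_nat n * S1"
    using Kmn_adj_mult_vec_part_sums[OF v(1)] by (simp_all add: S1_def S2_def)
  have "S1 \<noteq> 0 \<or> S2 \<noteq> 0"
  proof (rule ccontr)
    assume "\<not> (S1 \<noteq> 0 \<or> S2 \<noteq> 0)"
    then have "k * v $ i = 0" if "i < m + n" for i
      using arg_cong[OF Av, of "\<lambda>w. w $ i"] that v(1)
      by (cases "i < m") (simp_all add: Kmn_adj_mult_vec S1_def S2_def)
    then have "v = 0\<^sub>v (m + n)" using k v(1) by (intro eq_vecI) auto
    with v(2) show False ..
  qed
  moreover have "k\<^sup>2 * S1 = of_nat (m * n) * S1" "k\<^sup>2 * S2 = of_nat (m * n) * S2"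
    by (simp_all add: power2_eq_square mult.assoc S)
  ultimately show ?thesis by auto
qed simp

lemma Kmn_adj_eigenvalue_iff:
  assumes "1 < m" "0 < n"
  shows "eigenvalue (adj_mat (m + n) (Kmn m n)) k \<longleftrightarrow> k = 0 \<or> k\<^sup>2 = of_nat (m * n)"
proof
  let ?A = "adj_mat (m + n) (Kmn m n)"
  assume k: "k = 0 \<or> k\<^sup>2 = of_nat (m * n)"
  define v :: "complex vec" where
    "v = (if k = 0 then vec (m + n) (\<lambda>i. if i = 0 then 1 else if i = 1 then -1 else 0)
          else vec (m + n) (\<lambda>i. if i < m then k else of_nat m))"
  have v: "v \<in> carrier_vec (m + n)" by (simp add: v_def)
  have "?A *\<^sub>v v = k \<cdot>\<^sub>v v"
  proof (rule eq_vecI)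
    fix i assume "i < dim_vec (k \<cdot>\<^sub>v v)"
    then have i: "i < m + n" by (simp add: v_def)
    show "(?A *\<^sub>v v) $ i = (k \<cdot>\<^sub>v v) $ i"
    proof (cases "k = 0")
      case True
      have "(\<Sum>j\<in>{0..<m}. v $ j) = 0" "(\<Sum>j\<in>{m..<m+n}. v $ j) = 0"
        using True assms by (simp_all add: v_def sum.If_cases)
      then show ?thesis using True i v by (simp add: Kmn_adj_mult_vec)
    next
      case False
      then show ?thesis using k i v by (simp add: Kmn_adj_mult_vec v_def power2_eq_square)
    qed
  qed (simp add: v_def)
  moreover have "v \<noteq> 0\<^sub>v (m + n)"
  proof
    assume "v = 0\<^sub>v (m + n)"
    then have "v $ 0 = 0" "v $ m = 0" using assms by simp_all
    then show False using assms by (simp add: v_def split: if_splits)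
  qed
  ultimately show "eigenvalue ?A k" using v unfolding eigenvalue_def eigenvector_def by auto
qed (rule Kmn_adj_eigenvalue_cases)

lemma Kmn_num_distinct_eigenvalues:
  assumes "1 < m" "0 < n"
  shows "num_distinct_eigenvalues (m + n) (Kmn m n) = 3"
proof -
  define s where "s = csqrt (of_nat (m * n))"
  have "s\<^sup>2 = of_nat (m * n)"
    unfolding s_def by (rule power2_csqrt)
  then have "k\<^sup>2 = of_nat (m * n) \<longleftrightarrow> k = s \<or> k = - s" for k
    using power2_eq_iff[of k s] by simp
  then have "{k. eigenvalue (adj_mat (m + n) (Kmn m n)) k} = {0, s, - s}"
    using Kmn_adj_eigenvalue_iff[OF assms] by auto
  moreover have "s \<noteq> 0"
    using assms by (simp add: s_def)
  ultimately show ?thesis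
    unfolding num_distinct_eigenvalues_def by simp
qed

section \<open>Inverting the matrices of the linear space\<close>

lemma right_inverse_mat_unique:
  fixes A :: "'a :: field mat"
  assumes A: "A \<in> carrier_mat n n" and B: "B \<in> carrier_mat n n" and C: "C \<in> carrier_mat n n"
    and AB: "A * B = 1\<^sub>m n" and AC: "A * C = 1\<^sub>m n"
  shows "B = C"
proof -
  have "C * A = 1\<^sub>m n" by (rule mat_mult_left_right_inverse[OF A C AC])
  then have "B = (C * A) * B" using B by simp
  also have "\<dots> = C" using A B C AB by (simp add: assoc_mult_mat[of _ n n _ n _ n])
  finally show ?thesis .
qed

text \<open>The determinant of the matrix by which Kmn_pencil m n l1 l2 acts on the two part sums.\<close>

definition Kmn_pencil_det :: "nat \<Rightarrow> nat \<Rightarrow> complex \<Rightarrow> complex \<Rightarrow> complex" where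
  "Kmn_pencil_det m n l1 l2 = l1\<^sup>2 - of_nat m * of_nat n * l2\<^sup>2"

definition Kmn_pencil_inv :: "nat \<Rightarrow> nat \<Rightarrow> complex \<Rightarrow> complex \<Rightarrow> complex mat" where
  "Kmn_pencil_inv m n l1 l2 = mat (m + n) (m + n) (\<lambda>(i, j).
     (if i = j then 1 / l1 else 0) +
     (if (i < m) \<noteq> (j < m) then - l2 / Kmn_pencil_det m n l1 l2
      else (if i < m then of_nat n else of_nat m) * l2\<^sup>2 / (l1 * Kmn_pencil_det m n l1 l2)))"

lemma Kmn_pencil_inv_carrier [simp]: "Kmn_pencil_inv m n l1 l2 \<in> carrier_mat (m + n) (m + n)"
  by (simp add: Kmn_pencil_inv_def)

lemma Kmn_pencil_inv_dim [simp]: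
  "dim_row (Kmn_pencil_inv m n l1 l2) = m + n" "dim_col (Kmn_pencil_inv m n l1 l2) = m + n"
  by (simp_all add: Kmn_pencil_inv_def)

lemma Kmn_pencil_inv_col_part_sums:
  fixes l1 l2 :: complex
  assumes j: "j < m + n"
  defines "B \<equiv> Kmn_pencil_inv m n l1 l2" and "D \<equiv> Kmn_pencil_det m n l1 l2"
  shows "(\<Sum>k\<in>{0..<m}. col B j $ k) =
      (if j < m then 1 / l1 + of_nat m * of_nat n * l2\<^sup>2 / (l1 * D) else - of_nat m * l2 / D)"
    and "(\<Sum>k\<in>{m..<m+n}. col B j $ k) =
      (if j < m then - of_nat n * l2 / D else 1 / l1 + of_nat n * of_nat m * l2\<^sup>2 / (l1 * D))"
  using j by (simp_all add: B_def D_def Kmn_pencil_inv_def sum.distrib)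

lemma Kmn_pencil_mult_inv:
  assumes l1: "l1 \<noteq> 0" and D: "Kmn_pencil_det m n l1 l2 \<noteq> 0"
  shows "Kmn_pencil m n l1 l2 * Kmn_pencil_inv m n l1 l2 = 1\<^sub>m (m + n)"
proof (rule eq_matI)
  fix i j assume "i < dim_row (1\<^sub>m (m + n) :: complex mat)" "j < dim_col (1\<^sub>m (m + n) :: complex mat)"
  then have i: "i < m + n" and j: "j < m + n" by auto
  let ?B = "Kmn_pencil_inv m n l1 l2"
  have "(Kmn_pencil m n l1 l2 * ?B) $$ (i, j) = (Kmn_pencil m n l1 l2 *\<^sub>v col ?B j) $ i"
    using i j by simp
  also have "\<dots> = l1 * ?B $$ (i, j) + l2 *
      (if i < m then (\<Sum>k\<in>{m..<m+n}. col ?B j $ k) else (\<Sum>k\<in>{0..<m}. col ?B j $ k))"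
    using i j by (simp add: Kmn_pencil_mult_vec Kmn_adj_mult_vec)
  also have "\<dots> = 1\<^sub>m (m + n) $$ (i, j)"
    unfolding Kmn_pencil_inv_col_part_sums[OF j] using i j l1 D
    by (auto simp: Kmn_pencil_inv_def Kmn_pencil_det_def field_simps power2_eq_square)
  finally show "(Kmn_pencil m n l1 l2 * ?B) $$ (i, j) = 1\<^sub>m (m + n) $$ (i, j)" .
qed auto

lemma Kmn_pencil_right_inverse_params:
  assumes m: "1 < m" and B: "B \<in> carrier_mat (m + n) (m + n)"
    and inv: "Kmn_pencil m n l1 l2 * B = 1\<^sub>m (m + n)"
  shows "l1 \<noteq> 0" and "Kmn_pencil_det m n l1 l2 \<noteq> 0"
proof -
  define u where "u = col B 0"
  have u: "u \<in> carrier_vec (m + n)"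
    unfolding u_def using m by (intro col_carrier_vec[OF _ B]) simp
  have "Kmn_pencil m n l1 l2 *\<^sub>v u = col (Kmn_pencil m n l1 l2 * B) 0"
    unfolding u_def using m by (intro col_mult2[symmetric, OF Kmn_pencil_carrier B]) simp
  also have "\<dots> = unit_vec (m + n) 0"
    using m by (simp add: inv)
  finally have Pu: "l1 \<cdot>\<^sub>v u + l2 \<cdot>\<^sub>v (adj_mat (m + n) (Kmn m n) *\<^sub>v u) = unit_vec (m + n) 0"
    by (simp add: Kmn_pencil_mult_vec[OF u])
  define S1 where "S1 = (\<Sum>i\<in>{0..<m}. u $ i)"
  define S2 where "S2 = (\<Sum>i\<in>{m..<m+n}. u $ i)"
  have entries: "l1 * u $ i + l2 * S2 = (if i = 0 then 1 else 0)" if "i < m" for i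
    using arg_cong[OF Pu, of "\<lambda>w. w $ i"] that u by (simp add: Kmn_adj_mult_vec S2_def)
  show l1: "l1 \<noteq> 0"
  proof
    assume "l1 = 0"
    then show False using entries[of 0] entries[of 1] m by simp
  qed
  have "(\<Sum>i\<in>{0..<m}. (unit_vec (m + n) 0 :: complex vec) $ i) = 1"
    "(\<Sum>i\<in>{m..<m+n}. (unit_vec (m + n) 0 :: complex vec) $ i) = 0"
    using m by (simp_all add: unit_vec_def)
  then have part_sums: "l1 * S1 + of_nat m * l2 * S2 = 1" "l1 * S2 + of_nat n * l2 * S1 = 0"
    unfolding Pu[symmetric] using u
    by (simp_all add: sum.distrib sum_distrib_left Kmn_adj_mult_vec S1_def S2_def mult.assoc)
  have "Kmn_pencil_det m n l1 l2 * S1 =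
      l1 * (l1 * S1 + of_nat m * l2 * S2) - of_nat m * l2 * (l1 * S2 + of_nat n * l2 * S1)"
    by (simp add: Kmn_pencil_det_def power2_eq_square algebra_simps)
  then have "Kmn_pencil_det m n l1 l2 * S1 = l1"
    by (simp add: part_sums)
  then show "Kmn_pencil_det m n l1 l2 \<noteq> 0" using l1 by auto
qed

lemma Kmn_pencil_right_inverse:
  assumes "1 < m" and "B \<in> carrier_mat (m + n) (m + n)"
    and "Kmn_pencil m n l1 l2 * B = 1\<^sub>m (m + n)"
  shows "B = Kmn_pencil_inv m n l1 l2"
  by (rule right_inverse_mat_unique[OF Kmn_pencil_carrier assms(2) Kmn_pencil_inv_carrier assms(3)
        Kmn_pencil_mult_inv[OF Kmn_pencil_right_inverse_params[OF assms]]])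

section \<open>Linear forms as a vector space\<close>

lemma sum_fun_apply: "(\<Sum>v\<in>T. f v) x = (\<Sum>v\<in>T. f v x)"
  by (induction T rule: infinite_finite_induct) simp_all

interpretation lf: Modules.module lf_scale
  by unfold_locales (simp_all add: lf_scale_def fun_eq_iff algebra_simps)

lemma lf_sub_eq_diff: "lf_sub f g = f - g"
  by (simp add: lf_sub_def fun_eq_iff)

lemma lf_span_eq_span: "lf_span S = lf.span S"
proof -
  have "(\<lambda>a b. \<Sum>g\<in>T. u g * g a b) = (\<Sum>g\<in>T. lf_scale (u g) g)" for T u
    by (simp add: fun_eq_iff sum_fun_apply lf_scale_def)
  then show ?thesis
    unfolding lf_span_def lf.span_explicit by simp
qed

definition upper_pairs :: "nat \<Rightarrow> (nat \<times> nat) set" where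
  "upper_pairs N = (SIGMA a:{1..N}. {a..N})"

lemma finite_upper_pairs [simp]: "finite (upper_pairs N)"
  by (simp add: upper_pairs_def)

lemma lf_eval_upper_pairs: "lf_eval N c X = (\<Sum>(a, b)\<in>upper_pairs N. c a b * X $$ (a - 1, b - 1))"
  unfolding lf_eval_def upper_pairs_def by (simp add: sum.Sigma)

lemma lf_eval_add: "lf_eval N (f + g) X = lf_eval N f X + lf_eval N g X"
  by (simp add: lf_eval_def algebra_simps sum.distrib)

lemma lf_eval_diff: "lf_eval N (f - g) X = lf_eval N f X - lf_eval N g X"
  by (simp add: lf_eval_def algebra_simps sum_subtractf)

lemma lf_eval_scale: "lf_eval N (lf_scale k f) X = k * lf_eval N f X"
  by (simp add: lf_eval_def lf_scale_def sum_distrib_left mult.assoc)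

lemma lf_eval_zero: "lf_eval N 0 X = 0"
  by (simp add: lf_eval_def)

lemma var_upper_pair:
  assumes "(a, b) \<in> upper_pairs N"
  shows "var a b = (\<lambda>x y. if (x, y) = (a, b) then 1 else 0)"
  using assms by (auto simp: var_def upper_pairs_def fun_eq_iff)

lemma lf_eval_var:
  assumes "i \<in> {1..N}" "j \<in> {1..N}"
  shows "lf_eval N (var i j) X = X $$ (min i j - 1, max i j - 1)"
proof -
  have ij: "(min i j, max i j) \<in> upper_pairs N" using assms by (auto simp: upper_pairs_def)
  have "lf_eval N (var i j) X =
      (\<Sum>p\<in>upper_pairs N. if p = (min i j, max i j) then X $$ (min i j - 1, max i j - 1) else 0)"
    unfolding lf_eval_upper_pairs by (intro sum.cong) (auto simp: var_def split: if_splits)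
  also have "\<dots> = X $$ (min i j - 1, max i j - 1)"
    using ij by simp
  finally show ?thesis .
qed

lemma lin_forms_iff: "c \<in> lin_forms N \<longleftrightarrow> (\<forall>a b. (a, b) \<notin> upper_pairs N \<longrightarrow> c a b = 0)"
  unfolding lin_forms_def upper_pairs_def by (auto; meson order_trans)

lemma var_in_lin_forms: "i \<in> {1..N} \<Longrightarrow> j \<in> {1..N} \<Longrightarrow> var i j \<in> lin_forms N"
  by (auto simp: lin_forms_def var_def)

lemma subspace_lin_forms: "lf.subspace (lin_forms N)"
  by (auto simp: lf.subspace_def lin_forms_iff lf_scale_def)

lemma subspace_linear_forms_in_ideal: "lf.subspace (linear_forms_in_ideal N E)"
  using lf.subspace_0[OF subspace_lin_forms] lf.subspace_add[OF subspace_lin_forms]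
    lf.subspace_scale[OF subspace_lin_forms]
  by (auto simp: lf.subspace_def linear_forms_in_ideal_def lf_eval_zero lf_eval_add lf_eval_scale)

lemma lin_form_eq_sum_vars:
  assumes "c \<in> lin_forms N"
  shows "c = (\<Sum>(a, b)\<in>upper_pairs N. lf_scale (c a b) (var a b))"
proof (intro ext)
  fix x y
  have "(\<Sum>(a, b)\<in>upper_pairs N. lf_scale (c a b) (var a b)) x y =
      (\<Sum>p\<in>upper_pairs N. if p = (x, y) then c x y else 0)"
    unfolding sum_fun_apply by (intro sum.cong) (auto simp: lf_scale_def var_upper_pair split: if_splits)
  also have "\<dots> = c x y"
    using assms by (auto simp: lin_forms_iff)
  finally show "c x y = (\<Sum>(a, b)\<in>upper_pairs N. lf_scale (c a b) (var a b)) x y" ..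
qed

lemma lin_forms_subset_span_vars:
  "lin_forms N \<subseteq> lf.span ((\<lambda>(a, b). var a b) ` upper_pairs N)"
proof
  fix c assume "c \<in> lin_forms N"
  then have "c = (\<Sum>(a, b)\<in>upper_pairs N. lf_scale (c a b) (var a b))"
    by (rule lin_form_eq_sum_vars)
  also have "\<dots> \<in> lf.span ((\<lambda>(a, b). var a b) ` upper_pairs N)"
    by (intro lf.span_sum) (auto intro: lf.span_scale lf.span_base)
  finally show "c \<in> lf.span ((\<lambda>(a, b). var a b) ` upper_pairs N)" .
qed

section \<open>Linear forms vanishing on the reciprocal variety of K_{m,n}\<close>

text \<open>One variable for each orbit of pairs, namely the representatives used in Kmn_forms.\<close>

definition Kmn_canonical_vars :: "nat \<Rightarrow> (nat \<Rightarrow> nat \<Rightarrow> complex) set" where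
  "Kmn_canonical_vars m = {var 1 1, var (m + 1) (m + 1), var 1 2, var (m + 1) (m + 2), var 1 (m + 1)}"

definition Kmn_canonical_form ::
    "nat \<Rightarrow> complex \<Rightarrow> complex \<Rightarrow> complex \<Rightarrow> complex \<Rightarrow> complex \<Rightarrow> nat \<Rightarrow> nat \<Rightarrow> complex" where
  "Kmn_canonical_form m k1 k2 k3 k4 k5 =
    lf_scale k1 (var 1 1) + lf_scale k2 (var (m + 1) (m + 1)) + lf_scale k3 (var 1 2)
      + lf_scale k4 (var (m + 1) (m + 2)) + lf_scale k5 (var 1 (m + 1))"

lemma var_in_span_Kmn_forms_canonical_vars:
  assumes "(a, b) \<in> upper_pairs (m + n)"
  shows "var a b \<in> lf.span (Kmn_forms m n \<union> Kmn_canonical_vars m)"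
proof -
  note defs = Kmn_canonical_vars_def Kmn_forms_def lf_sub_eq_diff
  from assms have ab: "1 \<le> a" "a \<le> b" "b \<le> m + n" by (auto simp: upper_pairs_def)
  obtain r where r: "r \<in> Kmn_canonical_vars m" "r - var a b \<in> Kmn_forms m n"
  proof -
    consider "b \<le> m" "a = b" | "b \<le> m" "a \<noteq> b" | "m < a" "a = b" | "m < a" "a \<noteq> b"
      | "a \<le> m" "m < b" by linarith
    then show thesis
    proof cases
      case 1
      with ab show thesis by (intro that[of "var 1 1"]) (auto simp: defs)
    next
      case 2
      with ab show thesis by (intro that[of "var 1 2"]) (auto simp: defs)
    next
      case 3
      with ab show thesis by (intro that[of "var (m + 1) (m + 1)"]) (auto simp: defs)
    next
      case 4
      with ab show thesis by (intro that[of "var (m + 1) (m + 2)"]) (auto simp: defs)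
    next
      case 5
      with ab show thesis by (intro that[of "var 1 (m + 1)"]) (auto simp: defs)
    qed
  qed
  have "var a b = r - (r - var a b)" by simp
  also have "\<dots> \<in> lf.span (Kmn_forms m n \<union> Kmn_canonical_vars m)"
    using r by (intro lf.span_diff lf.span_base) auto
  finally show ?thesis .
qed

lemma Kmn_forms_subset_lin_forms:
  assumes "1 < m" "1 < n"
  shows "Kmn_forms m n \<subseteq> lin_forms (m + n)"
  using assms unfolding Kmn_forms_def lf_sub_eq_diff
  by (auto intro!: lf.subspace_diff[OF subspace_lin_forms] lf.subspace_scale[OF subspace_lin_forms]
      var_in_lin_forms)

lemma Kmn_forms_vanish_at_pencil_inv:
  assumes "1 < m" "1 < n" "l1 \<noteq> 0" "Kmn_pencil_det m n l1 l2 \<noteq> 0" "g \<in> Kmn_forms m n"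
  shows "lf_eval (m + n) g (Kmn_pencil_inv m n l1 l2) = 0"
  using assms unfolding Kmn_forms_def lf_sub_eq_diff
  by (elim UnE CollectE exE conjE singletonE)
    (auto simp: lf_eval_diff lf_eval_scale lf_eval_var Kmn_pencil_inv_def, simp add: field_simps)

lemma Kmn_forms_subset_ideal:
  assumes "1 < m" "1 < n"
  shows "Kmn_forms m n \<subseteq> linear_forms_in_ideal (m + n) (Kmn m n)"
proof
  fix g assume g: "g \<in> Kmn_forms m n"
  have "lf_eval (m + n) g B = 0"
    if M: "M \<in> lin_space (m + n) (Kmn m n)" and B: "B \<in> carrier_mat (m + n) (m + n)"
      and MB: "M * B = 1\<^sub>m (m + n)" for M B
  proof -
    obtain l1 l2 where "M = Kmn_pencil m n l1 l2"
      using M lin_space_Kmn_iff by blast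
    with MB have inv: "Kmn_pencil m n l1 l2 * B = 1\<^sub>m (m + n)" by simp
    show ?thesis
      unfolding Kmn_pencil_right_inverse[OF assms(1) B inv]
      using Kmn_forms_vanish_at_pencil_inv[OF assms Kmn_pencil_right_inverse_params[OF assms(1) B inv] g] .
  qed
  moreover have "g \<in> lin_forms (m + n)"
    using Kmn_forms_subset_lin_forms[OF assms] g ..
  ultimately show "g \<in> linear_forms_in_ideal (m + n) (Kmn m n)"
    unfolding linear_forms_in_ideal_def by blast
qed

lemma span_Kmn_forms_subset_ideal:
  assumes "1 < m" "1 < n"
  shows "lf.span (Kmn_forms m n) \<subseteq> linear_forms_in_ideal (m + n) (Kmn m n)"
  by (rule lf.span_minimal[OF Kmn_forms_subset_ideal[OF assms] subspace_linear_forms_in_ideal])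

lemma lf_eval_Kmn_canonical_form_at_pencil_inv:
  fixes l1 l2 :: complex
  assumes "1 < m" "1 < n"
  defines "D \<equiv> Kmn_pencil_det m n l1 l2"
  shows "lf_eval (m + n) (Kmn_canonical_form m k1 k2 k3 k4 k5) (Kmn_pencil_inv m n l1 l2)
    = k1 * (1 / l1 + of_nat n * l2\<^sup>2 / (l1 * D)) + k2 * (1 / l1 + of_nat m * l2\<^sup>2 / (l1 * D))
      + k3 * (of_nat n * l2\<^sup>2 / (l1 * D)) + k4 * (of_nat m * l2\<^sup>2 / (l1 * D)) - k5 * (l2 / D)"
  using assms
  by (simp add: Kmn_canonical_form_def lf_eval_add lf_eval_scale lf_eval_var Kmn_pencil_inv_def)

lemma Kmn_ideal_vanish_at_pencil_inv:
  assumes "c \<in> linear_forms_in_ideal (m + n) (Kmn m n)"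
    and "l1 \<noteq> 0" "Kmn_pencil_det m n l1 l2 \<noteq> 0"
  shows "lf_eval (m + n) c (Kmn_pencil_inv m n l1 l2) = 0"
proof -
  have "Kmn_pencil m n l1 l2 \<in> lin_space (m + n) (Kmn m n)"
    using lin_space_Kmn_iff by blast
  then show ?thesis
    using assms Kmn_pencil_inv_carrier Kmn_pencil_mult_inv[OF assms(2,3)]
    unfolding linear_forms_in_ideal_def by blast
qed

lemma Kmn_canonical_form_relations:
  fixes k1 k2 k3 k4 k5 :: complex
  assumes m: "1 < m" and n: "1 < n"
    and y: "Kmn_canonical_form m k1 k2 k3 k4 k5 \<in> linear_forms_in_ideal (m + n) (Kmn m n)"
  shows "k1 + k2 = 0" and "k5 = 0" and "(of_nat n - of_nat m) * k1 + of_nat n * k3 + of_nat m * k4 = 0"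
proof -
  have vanish: "k1 * (1 / l1 + of_nat n * l2\<^sup>2 / (l1 * D)) + k2 * (1 / l1 + of_nat m * l2\<^sup>2 / (l1 * D))
      + k3 * (of_nat n * l2\<^sup>2 / (l1 * D)) + k4 * (of_nat m * l2\<^sup>2 / (l1 * D)) - k5 * (l2 / D) = 0"
    if "l1 \<noteq> 0" "D = Kmn_pencil_det m n l1 l2" "D \<noteq> 0" for l1 l2 D
    using Kmn_ideal_vanish_at_pencil_inv[OF y, of l1 l2] that
    unfolding lf_eval_Kmn_canonical_form_at_pencil_inv[OF m n] by simp
  define d :: complex where "d = 1 - of_nat m * of_nat n"
  have "of_nat (m * n) \<noteq> (1 :: complex)"
    using m n by (metis less_not_refl2 n less_1_mult of_nat_eq_1_iff)
  then have d: "d \<noteq> 0" by (simp add: d_def)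
  have det: "Kmn_pencil_det m n 1 1 = d" "Kmn_pencil_det m n (-1) 1 = d"
    by (simp_all add: Kmn_pencil_det_def d_def)
  show k12: "k1 + k2 = 0"
    using vanish[of 1 1 0] by (simp add: Kmn_pencil_det_def)
  have "k1 * (d + of_nat n) + k2 * (d + of_nat m) + k3 * of_nat n + k4 * of_nat m - k5
      = d * (k1 * (1 + of_nat n / d) + k2 * (1 + of_nat m / d) + k3 * (of_nat n / d)
        + k4 * (of_nat m / d) - k5 * (1 / d))"
    using d by (simp add: field_simps)
  also have "\<dots> = 0"
    using vanish[of 1 d 1] det d by simp
  finally have plus: "k1 * (d + of_nat n) + k2 * (d + of_nat m) + k3 * of_nat n + k4 * of_nat m - k5 = 0" .
  have "- k1 * (d + of_nat n) - k2 * (d + of_nat m) - k3 * of_nat n - k4 * of_nat m - k5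
      = d * (k1 * (- 1 - of_nat n / d) + k2 * (- 1 - of_nat m / d) - k3 * (of_nat n / d)
        - k4 * (of_nat m / d) - k5 * (1 / d))"
    using d by (simp add: field_simps)
  also have "\<dots> = 0"
    using vanish[of "-1" d 1] det d by (simp add: algebra_simps)
  finally have minus: "- k1 * (d + of_nat n) - k2 * (d + of_nat m) - k3 * of_nat n - k4 * of_nat m - k5 = 0" .
  from plus minus have "(k1 * (d + of_nat n) + k2 * (d + of_nat m) + k3 * of_nat n + k4 * of_nat m - k5)
      + (- k1 * (d + of_nat n) - k2 * (d + of_nat m) - k3 * of_nat n - k4 * of_nat m - k5) = 0"
    by simp
  then show k5: "k5 = 0"
    by (simp add: algebra_simps)
  have "k2 = - k1"
    using k12 by (simp add: eq_neg_iff_add_eq_0 add.commute)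
  with plus k5 show "(of_nat n - of_nat m) * k1 + of_nat n * k3 + of_nat m * k4 = 0"
    by (simp add: algebra_simps)
qed

lemma Kmn_canonical_form_in_span:
  fixes k1 k2 k3 k4 k5 :: complex
  assumes m: "1 < m" and n: "1 < n"
    and rel: "k1 + k2 = 0" "k5 = 0" "(of_nat n - of_nat m) * k1 + of_nat n * k3 + of_nat m * k4 = 0"
  shows "Kmn_canonical_form m k1 k2 k3 k4 k5 \<in> lf.span (Kmn_forms m n)"
proof -
  define x where "x = var (m + n - 1) (m + n)"
  define z where "z = var (m + n) (m + n)"
  define G6 where "G6 = lf_scale (of_nat m) (var 1 2) - lf_scale (of_nat n) x"
  define G7 where "G7 = lf_scale (of_nat m) (var 1 1) - lf_scale (of_nat n - of_nat m) x - lf_scale (of_nat m) z"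
  define D2 where "D2 = var (m + 1) (m + 1) - z"
  define D4 where "D4 = var (m + 1) (m + 2) - x"
  have "m + n - 1 \<in> {m + 1..m + n}" "m + n \<in> {m + 1..m + n}" "m + n - 1 \<noteq> m + n"
    using n by auto
  then have G: "G6 \<in> Kmn_forms m n" "G7 \<in> Kmn_forms m n" "D2 \<in> Kmn_forms m n" "D4 \<in> Kmn_forms m n"
    unfolding G6_def G7_def D2_def D4_def x_def z_def Kmn_forms_def lf_sub_eq_diff by blast+
  have m0: "(of_nat m :: complex) \<noteq> 0" using m by simp
  have k2: "k2 = - k1" and k4: "k4 = - ((of_nat n - of_nat m) * k1 + of_nat n * k3) / of_nat m"
    using rel m0 by (simp_all add: eq_neg_iff_add_eq_0 add.commute field_simps)
  have "Kmn_canonical_form m k1 k2 k3 k4 k5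
    = lf_scale (k1 / of_nat m) G7 - lf_scale k1 D2 + lf_scale (k3 / of_nat m) G6 + lf_scale k4 D4"
    unfolding Kmn_canonical_form_def G6_def G7_def D2_def D4_def k2 k4 rel(2) using m0
    by (simp add: fun_eq_iff lf_scale_def field_simps)
  also have "\<dots> \<in> lf.span (Kmn_forms m n)"
    using G by (intro lf.span_add lf.span_diff lf.span_scale lf.span_base)
  finally show ?thesis .
qed

lemma Kmn_span_canonical_vars_ideal_in_span:
  assumes m: "1 < m" and n: "1 < n"
    and y: "y \<in> lf.span (Kmn_canonical_vars m)" "y \<in> linear_forms_in_ideal (m + n) (Kmn m n)"
  shows "y \<in> lf.span (Kmn_forms m n)"
proof -
  obtain k1 k2 k3 k4 k5 where "y = Kmn_canonical_form m k1 k2 k3 k4 k5"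
    using y(1) unfolding Kmn_canonical_vars_def Kmn_canonical_form_def lf.span_insert lf.span_empty
    by (auto simp: algebra_simps)
  with y(2) show ?thesis
    using Kmn_canonical_form_in_span[OF m n Kmn_canonical_form_relations[OF m n]] by simp
qed

lemma Kmn_ideal_subset_span_forms:
  assumes m: "1 < m" and n: "1 < n"
  shows "linear_forms_in_ideal (m + n) (Kmn m n) \<subseteq> lf.span (Kmn_forms m n)"
proof
  fix c assume c: "c \<in> linear_forms_in_ideal (m + n) (Kmn m n)"
  have "lf.span ((\<lambda>(a, b). var a b) ` upper_pairs (m + n))
      \<subseteq> lf.span (Kmn_forms m n \<union> Kmn_canonical_vars m)"
    using var_in_span_Kmn_forms_canonical_vars by (intro lf.span_minimal) auto
  with c lin_forms_subset_span_vars have "c \<in> lf.span (Kmn_forms m n \<union> Kmn_canonical_vars m)"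
    unfolding linear_forms_in_ideal_def by blast
  then obtain x y where c_eq: "c = x + y" and x: "x \<in> lf.span (Kmn_forms m n)"
    and y: "y \<in> lf.span (Kmn_canonical_vars m)"
    unfolding lf.span_Un by blast
  have "y = c - x" using c_eq by simp
  also have "\<dots> \<in> linear_forms_in_ideal (m + n) (Kmn m n)"
    using c span_Kmn_forms_subset_ideal[OF m n] x
    by (intro lf.subspace_diff[OF subspace_linear_forms_in_ideal]) auto
  finally have "y \<in> lf.span (Kmn_forms m n)"
    by (rule Kmn_span_canonical_vars_ideal_in_span[OF m n y])
  with x show "c \<in> lf.span (Kmn_forms m n)"
    unfolding c_eq by (rule lf.span_add)
qed

lemma Kmn_linear_forms_in_ideal:
  assumes "1 < m" "1 < n"
  shows "linear_forms_in_ideal (m + n) (Kmn m n) = lf_span (Kmn_forms m n)"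
  unfolding lf_span_eq_span
  using Kmn_ideal_subset_span_forms[OF assms] span_Kmn_forms_subset_ideal[OF assms] by blast

section \<open>Orbits of pairs of vertices\<close>

lemma graph_auts_permutes: "\<sigma> \<in> graph_auts N E \<Longrightarrow> \<sigma> permutes {1..N}"
  by (simp add: graph_auts_def)

lemma graph_auts_in: "\<sigma> \<in> graph_auts N E \<Longrightarrow> i \<in> {1..N} \<Longrightarrow> \<sigma> i \<in> {1..N}"
  by (meson graph_auts_permutes permutes_in_image)

lemma graph_auts_inj: "\<sigma> \<in> graph_auts N E \<Longrightarrow> inj \<sigma>"
  by (meson graph_auts_permutes permutes_inj)

lemma graph_auts_comp:
  assumes \<sigma>: "\<sigma> \<in> graph_auts N E" and \<tau>: "\<tau> \<in> graph_auts N E"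
  shows "\<tau> \<circ> \<sigma> \<in> graph_auts N E"
  using assms graph_auts_in[OF \<sigma>] permutes_compose[OF graph_auts_permutes[OF \<sigma>] graph_auts_permutes[OF \<tau>]]
  unfolding graph_auts_def by auto

lemma graph_auts_adj:
  "\<sigma> \<in> graph_auts N E \<Longrightarrow> i \<in> {1..N} \<Longrightarrow> j \<in> {1..N} \<Longrightarrow> E (\<sigma> i) (\<sigma> j) \<longleftrightarrow> E i j"
  by (simp add: graph_auts_def)

definition pair_orbit :: "nat \<Rightarrow> (nat \<Rightarrow> nat \<Rightarrow> bool) \<Rightarrow> nat set \<Rightarrow> nat set set" where
  "pair_orbit N E p = (\<lambda>\<sigma>. \<sigma> ` p) ` graph_auts N E"

lemma pair_orbit_eqI:
  assumes "p \<in> C" and "\<And>\<sigma> q. \<sigma> \<in> graph_auts N E \<Longrightarrow> q \<in> C \<Longrightarrow> \<sigma> ` q \<in> C"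
    and "\<And>q. q \<in> C \<Longrightarrow> \<exists>\<sigma>\<in>graph_auts N E. \<sigma> ` p = q"
  shows "pair_orbit N E p = C"
  using assms unfolding pair_orbit_def by blast

definition invariant_twin_class :: "nat \<Rightarrow> (nat \<Rightarrow> nat \<Rightarrow> bool) \<Rightarrow> nat set \<Rightarrow> bool" where
  "invariant_twin_class N E P \<longleftrightarrow>
     (\<forall>\<sigma>\<in>graph_auts N E. \<sigma> ` P \<subseteq> P) \<and> (\<forall>a\<in>P. \<forall>b\<in>P. transpose a b \<in> graph_auts N E)"

definition singletons :: "nat set \<Rightarrow> nat set set" where
  "singletons P = {{k} | k. k \<in> P}"

definition pairs_within :: "nat set \<Rightarrow> nat set set" where
  "pairs_within P = {{k, l} | k l. k \<in> P \<and> l \<in> P \<and> k \<noteq> l}"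

definition pairs_between :: "nat set \<Rightarrow> nat set \<Rightarrow> nat set set" where
  "pairs_between P Q = {{k, l} | k l. k \<in> P \<and> l \<in> Q}"

lemma pair_orbit_singletons:
  assumes P: "invariant_twin_class N E P" and p: "p \<in> singletons P"
  shows "pair_orbit N E p = singletons P"
proof (rule pair_orbit_eqI[OF p])
  fix \<sigma> q assume "\<sigma> \<in> graph_auts N E" "q \<in> singletons P"
  then show "\<sigma> ` q \<in> singletons P"
    using P unfolding invariant_twin_class_def singletons_def by blast
next
  fix q assume "q \<in> singletons P"
  then obtain i k where "p = {i}" "q = {k}" "i \<in> P" "k \<in> P"
    using p by (auto simp: singletons_def)
  then show "\<exists>\<sigma>\<in>graph_auts N E. \<sigma> ` p = q"
    using P unfolding invariant_twin_class_def by (intro bexI[of _ "transpose i k"]) auto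
qed

lemma transpose_transpose_image:
  assumes "i \<noteq> j" "k \<noteq> l"
  shows "(transpose (transpose i k j) l \<circ> transpose i k) ` {i, j} = {k, l}"
proof -
  have "transpose i k j \<noteq> k" using assms by (auto simp: transpose_def)
  then show ?thesis using assms by (auto simp: transpose_def)
qed

lemma pair_orbit_pairs_within:
  assumes P: "invariant_twin_class N E P" and p: "p \<in> pairs_within P"
  shows "pair_orbit N E p = pairs_within P"
proof (rule pair_orbit_eqI[OF p])
  fix \<sigma> q assume \<sigma>: "\<sigma> \<in> graph_auts N E" and "q \<in> pairs_within P"
  then obtain k l where kl: "q = {k, l}" "k \<in> P" "l \<in> P" "k \<noteq> l" by (auto simp: pairs_within_def)
  have "\<sigma> k \<in> P" "\<sigma> l \<in> P"
    using P \<sigma> kl unfolding invariant_twin_class_def by blast+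
  moreover have "\<sigma> k \<noteq> \<sigma> l"
    using kl(4) graph_auts_inj[OF \<sigma>] by (auto dest: injD)
  ultimately show "\<sigma> ` q \<in> pairs_within P"
    unfolding kl(1) pairs_within_def by auto
next
  fix q assume "q \<in> pairs_within P"
  then obtain i j k l where ij: "p = {i, j}" "i \<in> P" "j \<in> P" "i \<noteq> j"
    and kl: "q = {k, l}" "k \<in> P" "l \<in> P" "k \<noteq> l"
    using p by (auto simp: pairs_within_def)
  have "transpose i k j \<in> P" using ij kl by (auto simp: transpose_def)
  then have "transpose i k \<in> graph_auts N E" "transpose (transpose i k j) l \<in> graph_auts N E"
    using P ij kl unfolding invariant_twin_class_def by blast+
  then have "transpose (transpose i k j) l \<circ> transpose i k \<in> graph_auts N E"
    by (rule graph_auts_comp)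
  then show "\<exists>\<sigma>\<in>graph_auts N E. \<sigma> ` p = q"
    using transpose_transpose_image[OF ij(4) kl(4)] ij(1) kl(1) by blast
qed

lemma pair_orbit_pairs_between:
  assumes P: "invariant_twin_class N E P" and Q: "invariant_twin_class N E Q" and PQ: "P \<inter> Q = {}"
    and p: "p \<in> pairs_between P Q"
  shows "pair_orbit N E p = pairs_between P Q"
proof (rule pair_orbit_eqI[OF p])
  fix \<sigma> q assume \<sigma>: "\<sigma> \<in> graph_auts N E" and "q \<in> pairs_between P Q"
  then obtain k l where kl: "q = {k, l}" "k \<in> P" "l \<in> Q" by (auto simp: pairs_between_def)
  have "\<sigma> k \<in> P" "\<sigma> l \<in> Q"
    using P Q \<sigma> kl unfolding invariant_twin_class_def by blast+
  then show "\<sigma> ` q \<in> pairs_between P Q"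
    unfolding kl(1) pairs_between_def by auto
next
  fix q assume "q \<in> pairs_between P Q"
  then obtain i j k l where ij: "p = {i, j}" "i \<in> P" "j \<in> Q" and kl: "q = {k, l}" "k \<in> P" "l \<in> Q"
    using p by (auto simp: pairs_between_def)
  have "transpose i k \<in> graph_auts N E" "transpose j l \<in> graph_auts N E"
    using P Q ij kl unfolding invariant_twin_class_def by blast+
  then have "transpose j l \<circ> transpose i k \<in> graph_auts N E"
    by (rule graph_auts_comp)
  moreover have "j \<noteq> i" "j \<noteq> k" "k \<noteq> j" "k \<noteq> l"
    using PQ ij kl by auto
  then have "(transpose j l \<circ> transpose i k) ` p = q"
    using ij(1) kl(1) by simp
  ultimately show "\<exists>\<sigma>\<in>graph_auts N E. \<sigma> ` p = q" by blast
qed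

lemma unordered_pairs_split:
  assumes "{1..N} = P \<union> Q"
  shows "unordered_pairs N = singletons P \<union> singletons Q \<union> pairs_within P \<union> pairs_within Q
    \<union> pairs_between P Q"
proof
  show "unordered_pairs N \<subseteq> singletons P \<union> singletons Q \<union> pairs_within P \<union> pairs_within Q
    \<union> pairs_between P Q"
  proof
    fix p assume "p \<in> unordered_pairs N"
    then obtain i j where p: "p = {i, j}" and "i \<in> {1..N}" "j \<in> {1..N}"
      unfolding unordered_pairs_def by auto
    with assms have ij: "i \<in> P \<union> Q" "j \<in> P \<union> Q"
      by blast+
    consider "i = j" | "i \<noteq> j" "i \<in> P" "j \<in> P" | "i \<noteq> j" "i \<in> Q" "j \<in> Q" | "i \<in> P" "j \<in> Q"
      | "i \<in> Q" "j \<in> P"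
      using ij by blast
    then show "p \<in> singletons P \<union> singletons Q \<union> pairs_within P \<union> pairs_within Q \<union> pairs_between P Q"
    proof cases
      case 5
      then have "p = {j, i}" using p by auto
      with 5 show ?thesis unfolding pairs_between_def by blast
    qed (use p ij in \<open>auto simp: singletons_def pairs_within_def pairs_between_def\<close>)
  qed
next
  show "singletons P \<union> singletons Q \<union> pairs_within P \<union> pairs_within Q \<union> pairs_between P Q
    \<subseteq> unordered_pairs N"
    using assms unfolding singletons_def pairs_within_def pairs_between_def unordered_pairs_def by blast
qed

lemma pair_orbit_image_eq:
  assumes "\<And>p. p \<in> C \<Longrightarrow> pair_orbit N E p = C" and "x \<in> C"
  shows "pair_orbit N E ` C = {C}"
  using assms by auto

lemma Kmn_iff: "i \<in> {1..m + n} \<Longrightarrow> j \<in> {1..m + n} \<Longrightarrow> Kmn m n i j \<longleftrightarrow> (i \<le> m) \<noteq> (j \<le> m)"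
  unfolding Kmn_def by auto

lemma Kmn_transpose_aut:
  assumes a: "a \<in> {1..m + n}" and b: "b \<in> {1..m + n}" and ab: "(a \<le> m) = (b \<le> m)"
  shows "transpose a b \<in> graph_auts (m + n) (Kmn m n)"
proof -
  have p: "transpose a b permutes {1..m + n}" using a b by (rule permutes_swap_id)
  have part: "(transpose a b x \<le> m) = (x \<le> m)" for x
    using ab by (auto simp: transpose_def)
  have "Kmn m n i j \<longleftrightarrow> Kmn m n (transpose a b i) (transpose a b j)"
    if "i \<in> {1..m + n}" "j \<in> {1..m + n}" for i j
    using Kmn_iff[OF that] Kmn_iff[OF permutes_in_image[OF p, THEN iffD2, OF that(1)]
        permutes_in_image[OF p, THEN iffD2, OF that(2)]] part
    by simp
  then show ?thesis unfolding graph_auts_def using p by auto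
qed

lemma Kmn_aut_maps_smaller_part:
  assumes n: "m < n" and \<sigma>: "\<sigma> \<in> graph_auts (m + n) (Kmn m n)" and a: "a \<in> {1..m}"
  shows "\<sigma> a \<in> {1..m}"
proof (rule ccontr)
  assume "\<sigma> a \<notin> {1..m}"
  then have a': "\<sigma> a \<in> {m+1..m+n}" using graph_auts_in[OF \<sigma>, of a] a by auto
  have "\<sigma> b \<in> {1..m}" if b: "b \<in> {m+1..m+n}" for b
  proof -
    have "Kmn m n a b" using a b by (simp add: Kmn_def)
    then have "Kmn m n (\<sigma> a) (\<sigma> b)"
      using a b graph_auts_adj[OF \<sigma>, of a b] by simp
    then show ?thesis using a' graph_auts_in[OF \<sigma>, of b] b by (auto simp: Kmn_iff)
  qed
  then have "\<sigma> ` {m+1..m+n} \<subseteq> {1..m}" by auto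
  moreover have "inj_on \<sigma> {m+1..m+n}" using graph_auts_inj[OF \<sigma>] by (rule inj_on_subset) simp
  ultimately have "card {m+1..m+n} \<le> card {1..m}" by (metis card_inj_on_le finite_atLeastAtMost)
  with n show False by simp
qed

lemma Kmn_aut_maps_larger_part:
  assumes m: "0 < m" "m < n" and \<sigma>: "\<sigma> \<in> graph_auts (m + n) (Kmn m n)" and b: "b \<in> {m+1..m+n}"
  shows "\<sigma> b \<in> {m+1..m+n}"
proof (rule ccontr)
  assume "\<sigma> b \<notin> {m+1..m+n}"
  then have "\<sigma> b \<in> {1..m}" using graph_auts_in[OF \<sigma>, of b] b by auto
  moreover have "\<sigma> 1 \<in> {1..m}" using Kmn_aut_maps_smaller_part[OF m(2) \<sigma>, of 1] m(1) by simp
  moreover have "Kmn m n 1 b" using m b by (simp add: Kmn_def)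
  then have "Kmn m n (\<sigma> 1) (\<sigma> b)"
    using m b graph_auts_adj[OF \<sigma>, of 1 b] by simp
  ultimately show False by (simp add: Kmn_def)
qed

lemma Kmn_invariant_twin_classes:
  assumes "0 < m" "m < n"
  shows "invariant_twin_class (m + n) (Kmn m n) {1..m}"
    and "invariant_twin_class (m + n) (Kmn m n) {m+1..m+n}"
  using Kmn_aut_maps_smaller_part[OF assms(2)] Kmn_aut_maps_larger_part[OF assms]
  by (auto simp: invariant_twin_class_def intro!: Kmn_transpose_aut)

lemma Kmn_pair_orbits:
  assumes "1 < m" "m < n"
  shows "pair_orbits (m + n) (Kmn m n) = {singletons {1..m}, singletons {m+1..m+n},
    pairs_within {1..m}, pairs_within {m+1..m+n}, pairs_between {1..m} {m+1..m+n}}"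
proof -
  define V1 where "V1 = {1..m}"
  define V2 where "V2 = {m+1..m+n}"
  have V: "invariant_twin_class (m + n) (Kmn m n) V1" "invariant_twin_class (m + n) (Kmn m n) V2"
    using Kmn_invariant_twin_classes[of m n] assms by (simp_all add: V1_def V2_def)
  have V12: "V1 \<inter> V2 = {}" "{1..m + n} = V1 \<union> V2" by (auto simp: V1_def V2_def)
  have w: "{1} \<in> singletons V1" "{m + 1} \<in> singletons V2" "{1, 2} \<in> pairs_within V1"
    "{m + 1, m + 2} \<in> pairs_within V2" "{1, m + 1} \<in> pairs_between V1 V2"
    using assms unfolding singletons_def pairs_within_def pairs_between_def V1_def V2_def
    by fastforce+
  have "pair_orbits (m + n) (Kmn m n) = pair_orbit (m + n) (Kmn m n) ` unordered_pairs (m + n)"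
    unfolding pair_orbits_def pair_orbit_def ..
  also have "\<dots> = {singletons V1, singletons V2, pairs_within V1, pairs_within V2, pairs_between V1 V2}"
    unfolding unordered_pairs_split[OF V12(2)] image_Un
    by (simp add: pair_orbit_image_eq[OF pair_orbit_singletons[OF V(1)] w(1)]
      pair_orbit_image_eq[OF pair_orbit_singletons[OF V(2)] w(2)]
      pair_orbit_image_eq[OF pair_orbit_pairs_within[OF V(1)] w(3)]
      pair_orbit_image_eq[OF pair_orbit_pairs_within[OF V(2)] w(4)]
      pair_orbit_image_eq[OF pair_orbit_pairs_between[OF V V12(1)] w(5)] insert_commute)
  finally show ?thesis unfolding V1_def V2_def .
qed

lemma card_Kmn_pair_classes:
  assumes "1 < m" "1 < n"
  shows "card {singletons {1..m}, singletons {m+1..m+n},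
    pairs_within {1..m}, pairs_within {m+1..m+n}, pairs_between {1..m} {m+1..m+n}} = 5"
proof -
  define V1 where "V1 = {1..m}"
  define V2 where "V2 = {m+1..m+n}"
  have w: "{1} \<in> singletons V1" "{m + 1} \<in> singletons V2" "{1, 2} \<in> pairs_within V1"
    "{m + 1, m + 2} \<in> pairs_within V2"
    using assms unfolding singletons_def pairs_within_def V1_def V2_def by fastforce+
  have "{1} \<notin> singletons V2" "{1} \<notin> pairs_within V1" "{1} \<notin> pairs_within V2"
    "{1} \<notin> pairs_between V1 V2" "{m + 1} \<notin> pairs_within V1" "{m + 1} \<notin> pairs_within V2"
    "{m + 1} \<notin> pairs_between V1 V2" "{1, 2} \<notin> pairs_within V2" "{1, 2} \<notin> pairs_between V1 V2"
    "{m + 1, m + 2} \<notin> pairs_between V1 V2"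
    using assms unfolding singletons_def pairs_within_def pairs_between_def V1_def V2_def
    by (auto simp: doubleton_eq_iff)
  with w have "singletons V1 \<noteq> singletons V2" "singletons V1 \<noteq> pairs_within V1"
    "singletons V1 \<noteq> pairs_within V2" "singletons V1 \<noteq> pairs_between V1 V2"
    "singletons V2 \<noteq> pairs_within V1" "singletons V2 \<noteq> pairs_within V2"
    "singletons V2 \<noteq> pairs_between V1 V2" "pairs_within V1 \<noteq> pairs_within V2"
    "pairs_within V1 \<noteq> pairs_between V1 V2" "pairs_within V2 \<noteq> pairs_between V1 V2"
    by metis+
  then show ?thesis unfolding V1_def V2_def by simp
qed

theorem mainTheorem6:
  fixes m n :: nat
  assumes "1 < m" and "m < n"
  shows "num_distinct_eigenvalues (m + n) (Kmn m n) = 3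
       \<and> num_pair_orbits (m + n) (Kmn m n) = 5
       \<and> linear_forms_in_ideal (m + n) (Kmn m n) = lf_span (Kmn_forms m n)"
proof -
  have n: "1 < n" using assms by simp
  show ?thesis
    using Kmn_num_distinct_eigenvalues[OF assms(1)] Kmn_linear_forms_in_ideal[OF assms(1) n] n
      card_Kmn_pair_classes[OF assms(1) n]
    by (simp add: num_pair_orbits_def Kmn_pair_orbits[OF assms])
qed

end
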